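(* Let $u:[0,b)\to(0,\infty)$ be a solution of $\frac{u''}{1+(u')^2}=\frac{xu'}{2}-\frac u2+\frac{n-1}{u}$ with $u(0)<\sqrt{2(n-1)}$ and $u'(0)<0$. Then $u$ is strictly convex on $[0,b)$.
   Context: $n\ge2$ is a fixed integer. *)

theory Defs
  imports "HOL-Analysis.Analysis" "HOL-Library.Extended_Real"
begin

definition strictly_convex_on :: "real set \<Rightarrow> (real \<Rightarrow> real) \<Rightarrow> bool" where
  "strictly_convex_on S f \<longleftrightarrow> convex S \<and>
    (\<forall>x\<in>S. \<forall>y\<in>S. \<forall>t. x \<noteq> y \<longrightarrow> 0 < t \<longrightarrow> t < 1 \<longrightarrow>
       f ((1 - t) * x + t * y) < (1 - t) * f x + t * f y)"

end

theory Submission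
  imports Defs
begin

text \<open>Put \<open>k = n - 1\<close> and \<open>\<psi> = (x u u' - u\<^sup>2)/2 + k\<close>. The equation says
  \<open>u'' = (1 + u'\<^sup>2) \<psi> / u\<close>, so it suffices that \<open>\<psi> > 0\<close>; the initial conditions give
  \<open>\<psi>(0) > 0\<close> and \<open>\<psi>'(0) > 0\<close>. Using the equation once more,
  \<open>\<psi>'' = x (1 + u'\<^sup>2)/2 \<cdot> \<psi>' + (1 + u'\<^sup>2) x u' \<psi> (1 + \<psi>) / u\<close>. At a first zero \<open>t > 0\<close>
  of \<open>\<psi>'\<close> we would have \<open>\<psi>(t) > 0\<close>, hence \<open>u'(t) > 0\<close> (otherwise \<open>\<psi>'(t) > 0\<close> by
  its formula), hence \<open>\<psi>''(t) > 0\<close>, which is impossible for a function that decreases to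
  its first zero. So \<open>\<psi>' > 0\<close>, \<open>\<psi>\<close> increases, \<open>u'' > 0\<close> and \<open>u\<close> is strictly convex.\<close>

lemma mvt_within_interval:
  fixes f f' :: "real \<Rightarrow> real"
  assumes S: "is_interval S" and x: "x \<in> S" and y: "y \<in> S" and "x < y"
    and deriv: "\<And>t. t \<in> S \<Longrightarrow> (f has_real_derivative f' t) (at t within S)"
  shows "\<exists>z. x < z \<and> z < y \<and> f y - f x = (y - x) * f' z"
proof -
  have sub: "{x..y} \<subseteq> S"
    using mem_is_interval_1_I[OF S x y] by auto
  have "(f has_derivative (*) (f' t)) (at t within {x..y})" if "x \<le> t" "t \<le> y" for t
  proof -
    have "t \<in> S" using that sub by auto
    from DERIV_subset[OF deriv[OF this] sub] show ?thesis
      by (simp add: has_field_derivative_def)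
  qed
  from mvt_simple[OF \<open>x < y\<close> this] show ?thesis
    by (auto simp: mult.commute)
qed

lemma strict_mono_on_if_deriv_pos:
  fixes f f' :: "real \<Rightarrow> real"
  assumes "is_interval S"
    and "\<And>t. t \<in> S \<Longrightarrow> (f has_real_derivative f' t) (at t within S)"
    and "\<And>t. t \<in> S \<Longrightarrow> 0 < f' t"
  shows "strict_mono_on S f"
proof (rule strict_mono_onI)
  fix x y assume "x \<in> S" "y \<in> S" "x < y"
  with mvt_within_interval[OF assms(1) _ _ _ assms(2)] obtain z
    where "x < z" "z < y" "f y - f x = (y - x) * f' z" by blast
  moreover have "z \<in> S"
    using mem_is_interval_1_I[OF assms(1) \<open>x \<in> S\<close> \<open>y \<in> S\<close>] \<open>x < z\<close> \<open>z < y\<close> by simp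
  moreover have "0 < (y - x) * f' z"
    using assms(3)[OF \<open>z \<in> S\<close>] \<open>x < y\<close> by simp
  ultimately show "f x < f y" by simp
qed

lemma strictly_convex_on_if_deriv_strict_mono:
  fixes f f' :: "real \<Rightarrow> real"
  assumes S: "convex S"
    and deriv: "\<And>t. t \<in> S \<Longrightarrow> (f has_real_derivative f' t) (at t within S)"
    and mono: "strict_mono_on S f'"
  shows "strictly_convex_on S f"
proof -
  have I: "is_interval S" using S by (simp add: is_interval_convex_1)
  have chord: "f ((1 - t) * x + t * y) < (1 - t) * f x + t * f y"
    if "x \<in> S" "y \<in> S" "x < y" "0 < t" "t < 1" for x y t
  proof -
    define z where "z = (1 - t) * x + t * y"
    have zx: "z - x = t * (y - x)" and yz: "y - z = (1 - t) * (y - x)"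
      unfolding z_def by (simp_all add: algebra_simps)
    have "0 < t * (y - x)" "0 < (1 - t) * (y - x)"
      using that by simp_all
    then have "x < z" "z < y"
      unfolding zx[symmetric] yz[symmetric] by simp_all
    then have "z \<in> S" using mem_is_interval_1_I[OF I \<open>x \<in> S\<close> \<open>y \<in> S\<close>] by simp
    obtain z1 where z1: "x < z1" "z1 < z" "f z - f x = (z - x) * f' z1"
      using mvt_within_interval[OF I \<open>x \<in> S\<close> \<open>z \<in> S\<close> \<open>x < z\<close> deriv] by blast
    obtain z2 where z2: "z < z2" "z2 < y" "f y - f z = (y - z) * f' z2"
      using mvt_within_interval[OF I \<open>z \<in> S\<close> \<open>y \<in> S\<close> \<open>z < y\<close> deriv] by blast
    have "z1 \<in> S" "z2 \<in> S"
      using mem_is_interval_1_I[OF I \<open>x \<in> S\<close> \<open>y \<in> S\<close>] z1 z2 \<open>x < z\<close> \<open>z < y\<close> by simp_all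
    then have "f' z1 < f' z2" using mono z1 z2 by (auto intro: strict_mono_onD)
    have "0 < t * (1 - t) * (y - x) * (f' z2 - f' z1)"
      using that \<open>f' z1 < f' z2\<close> by simp
    also have "\<dots> = t * (f y - f z) - (1 - t) * (f z - f x)"
      unfolding z1(3) z2(3) zx yz by (simp add: algebra_simps)
    also have "\<dots> = (1 - t) * f x + t * f y - f z"
      by (simp add: algebra_simps)
    finally show ?thesis by (simp add: z_def)
  qed
  show ?thesis
    unfolding strictly_convex_on_def
  proof (intro conjI S ballI allI impI)
    fix x y t :: real assume "x \<in> S" "y \<in> S" "x \<noteq> y" "0 < t" "t < 1"
    then consider "x < y" | "y < x" by linarith
    then show "f ((1 - t) * x + t * y) < (1 - t) * f x + t * f y"
    proof cases
      case 1 then show ?thesis using chord \<open>x \<in> S\<close> \<open>y \<in> S\<close> \<open>0 < t\<close> \<open>t < 1\<close> by blast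
    next
      case 2
      from chord[OF \<open>y \<in> S\<close> \<open>x \<in> S\<close> this, of "1 - t"] \<open>0 < t\<close> \<open>t < 1\<close>
      show ?thesis by (simp add: algebra_simps)
    qed
  qed
qed

lemma first_zero_crossing:
  fixes g :: "real \<Rightarrow> real"
  assumes "a \<le> c" and cont: "continuous_on {a..c} g" and "0 < g a" "g c \<le> 0"
  obtains t where "a < t" "t \<le> c" "g t = 0" "\<And>s. a \<le> s \<Longrightarrow> s < t \<Longrightarrow> 0 < g s"
proof -
  define Z where "Z = {s \<in> {a..c}. g s = 0}"
  have zero_below: "\<exists>z\<in>Z. z \<le> s" if "a \<le> s" "s \<le> c" "g s \<le> 0" for s
  proof -
    have "continuous_on {a..s} g" using cont that by (auto elim: continuous_on_subset)
    then have "\<exists>z\<ge>a. z \<le> s \<and> g z = 0"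
      using IVT2'[of g s 0 a] that \<open>0 < g a\<close> by simp
    then obtain z where "a \<le> z" "z \<le> s" "g z = 0" by blast
    then show ?thesis using that unfolding Z_def by auto
  qed
  have "Z \<noteq> {}" using zero_below[OF \<open>a \<le> c\<close> order_refl \<open>g c \<le> 0\<close>] by auto
  moreover have "bdd_below Z" "closed Z"
    using continuous_closed_preimage_constant[OF cont] unfolding Z_def by auto
  ultimately have "Inf Z \<in> Z" by (rule closed_contains_Inf)
  show thesis
  proof
    show "a < Inf Z" "Inf Z \<le> c" "g (Inf Z) = 0"
      using \<open>Inf Z \<in> Z\<close> \<open>0 < g a\<close> unfolding Z_def by (auto simp: less_le)
  next
    fix s assume "a \<le> s" "s < Inf Z"
    show "0 < g s"
    proof (rule ccontr)
      assume "\<not> 0 < g s"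
      moreover have "s \<le> c"
        using \<open>s < Inf Z\<close> \<open>Inf Z \<in> Z\<close> unfolding Z_def by simp
      ultimately obtain z where "z \<in> Z" "z \<le> s"
        using zero_below \<open>a \<le> s\<close> by (meson not_less)
      then show False
        using cInf_lower[OF _ \<open>bdd_below Z\<close>] \<open>s < Inf Z\<close> by fastforce
    qed
  qed
qed

lemma deriv_nonpos_at_first_zero:
  fixes g :: "real \<Rightarrow> real"
  assumes deriv: "(g has_real_derivative l) (at t within {a..t})" and "a < t" and "g t = 0"
    and before: "\<And>s. a \<le> s \<Longrightarrow> s < t \<Longrightarrow> 0 < g s"
  shows "l \<le> 0"
proof (rule ccontr)
  assume "\<not> l \<le> 0"
  from has_real_derivative_pos_inc_left[OF deriv] this \<open>g t = 0\<close>
  obtain d where "0 < d" and dec: "\<And>h. 0 < h \<Longrightarrow> t - h \<in> {a..t} \<Longrightarrow> h < d \<Longrightarrow> g (t - h) < 0"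
    by auto
  define h where "h = min (d / 2) (t - a)"
  have "0 < h" "h < d" "h \<le> t - a"
    using \<open>0 < d\<close> \<open>a < t\<close> by (auto simp: h_def)
  then have "g (t - h) < 0"
    using dec by simp
  moreover have "0 < g (t - h)"
    using before \<open>0 < h\<close> \<open>h \<le> t - a\<close> by simp
  ultimately show False by simp
qed

locale shrinker_profile =
  fixes S :: "real set" and k :: real and u u' u'' :: "real \<Rightarrow> real"
  assumes convex: "convex S"
    and zero_mem: "0 \<in> S"
    and nonneg: "\<And>x. x \<in> S \<Longrightarrow> 0 \<le> x"
    and u_pos: "\<And>x. x \<in> S \<Longrightarrow> 0 < u x"
    and u_deriv: "\<And>x. x \<in> S \<Longrightarrow> (u has_real_derivative u' x) (at x within S)"
    and u'_deriv: "\<And>x. x \<in> S \<Longrightarrow> (u' has_real_derivative u'' x) (at x within S)"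
    and ode: "\<And>x. x \<in> S \<Longrightarrow> u'' x / (1 + (u' x)\<^sup>2) = x * u' x / 2 - u x / 2 + k / u x"
begin

lemma interval: "is_interval S"
  using convex by (simp add: is_interval_convex_1)

definition psi :: "real \<Rightarrow> real" where
  "psi x = (x * u x * u' x - (u x)\<^sup>2) / 2 + k"

definition psi' :: "real \<Rightarrow> real" where
  "psi' x = u' x * (x * u' x - u x) / 2 + x * (1 + (u' x)\<^sup>2) * psi x / 2"

lemma u''_eq: "x \<in> S \<Longrightarrow> u'' x = (1 + (u' x)\<^sup>2) * psi x / u x"
  using ode[of x] u_pos[of x] add_pos_nonneg[of 1 "(u' x)\<^sup>2"]
  by (simp add: psi_def field_simps power2_eq_square)

lemma psi_deriv:
  assumes "x \<in> S"
  shows "(psi has_real_derivative psi' x) (at x within S)"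
proof -
  have "(psi has_real_derivative
      ((u x + x * u' x) * u' x + x * u x * u'' x - 2 * u x * u' x) / 2) (at x within S)"
    unfolding psi_def[abs_def]
    by (auto intro!: derivative_eq_intros u_deriv u'_deriv assms simp: field_simps power2_eq_square)
  moreover have "((u x + x * u' x) * u' x + x * u x * u'' x - 2 * u x * u' x) / 2 = psi' x"
    using u''_eq[OF assms] u_pos[OF assms] by (simp add: psi'_def field_simps)
  ultimately show ?thesis by simp
qed

lemma psi'_deriv:
  assumes "x \<in> S"
  shows "(psi' has_real_derivative
     x * (1 + (u' x)\<^sup>2) / 2 * psi' x + (1 + (u' x)\<^sup>2) * x * u' x * psi x * (1 + psi x) / u x)
     (at x within S)"
  unfolding psi'_def[abs_def] using u_pos[OF assms]
  by (auto intro!: derivative_eq_intros u_deriv u'_deriv psi_deriv assms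
      simp: u''_eq[OF assms] psi'_def field_simps power2_eq_square)

lemma psi'_pos_if_u'_nonpos:
  assumes "x \<in> S" "0 < x" "0 < psi x" "u' x \<le> 0"
  shows "0 < psi' x"
proof -
  have "x * u' x \<le> 0"
    using assms(2,4) by (simp add: mult_nonneg_nonpos)
  then have "x * u' x - u x < 0"
    using u_pos[OF assms(1)] by linarith
  then have "0 \<le> u' x * (x * u' x - u x)"
    using assms(4) by (simp add: mult_nonpos_nonpos)
  moreover have "0 < x * (1 + (u' x)\<^sup>2) * psi x"
    using assms(2,3) by (simp add: add_pos_nonneg)
  ultimately show ?thesis
    unfolding psi'_def by simp
qed

lemma psi'_pos:
  assumes init_u': "u' 0 < 0" and init_psi: "0 < psi 0" and "c \<in> S"
  shows "0 < psi' c"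
proof (rule ccontr)
  assume "\<not> 0 < psi' c"
  then have "psi' c \<le> 0" by simp
  have "0 < psi' 0"
    using init_u' u_pos[OF zero_mem] by (simp add: psi'_def mult_neg_pos)
  have "0 \<le> c" using nonneg \<open>c \<in> S\<close> .
  have "{0..c} \<subseteq> S"
    using mem_is_interval_1_I[OF interval zero_mem \<open>c \<in> S\<close>] by auto
  moreover have "continuous_on S psi'"
    by (rule DERIV_continuous_on[OF psi'_deriv])
  ultimately have "continuous_on {0..c} psi'"
    by (rule continuous_on_subset[rotated])
  then obtain t where t: "0 < t" "t \<le> c" "psi' t = 0"
    and before: "\<And>s. 0 \<le> s \<Longrightarrow> s < t \<Longrightarrow> 0 < psi' s"
    using first_zero_crossing[OF \<open>0 \<le> c\<close> _ \<open>0 < psi' 0\<close> \<open>psi' c \<le> 0\<close>] by blast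
  have t_mem: "t \<in> S"
    using mem_is_interval_1_I[OF interval zero_mem \<open>c \<in> S\<close>] t by simp
  obtain z where "0 < z" "z < t" "psi t - psi 0 = (t - 0) * psi' z"
    using mvt_within_interval[where f = psi and f' = psi', OF interval zero_mem t_mem \<open>0 < t\<close>]
      psi_deriv by blast
  moreover have "0 < t * psi' z"
    using before[of z] \<open>0 < z\<close> \<open>z < t\<close> by simp
  ultimately have "0 < psi t"
    using init_psi by simp
  have "0 < u' t"
  proof (rule ccontr)
    assume "\<not> 0 < u' t"
    then have "0 < psi' t"
      using psi'_pos_if_u'_nonpos[OF t_mem \<open>0 < t\<close> \<open>0 < psi t\<close>] by simp
    then show False using \<open>psi' t = 0\<close> by simp
  qed
  then have "0 < t * (1 + (u' t)\<^sup>2) / 2 * psi' t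
      + (1 + (u' t)\<^sup>2) * t * u' t * psi t * (1 + psi t) / u t"
    using \<open>psi' t = 0\<close> \<open>0 < t\<close> \<open>0 < psi t\<close> u_pos[OF t_mem] by (simp add: add_pos_nonneg)
  moreover have "{0..t} \<subseteq> S"
    using mem_is_interval_1_I[OF interval zero_mem t_mem] by auto
  ultimately show False
    using deriv_nonpos_at_first_zero[OF DERIV_subset[OF psi'_deriv[OF t_mem]] \<open>0 < t\<close> \<open>psi' t = 0\<close> before]
    by simp
qed

lemma psi_pos:
  assumes "u' 0 < 0" "0 < psi 0" "x \<in> S"
  shows "0 < psi x"
proof (cases "x = 0")
  case False
  then have "0 < x" using nonneg[OF assms(3)] by simp
  have "strict_mono_on S psi"
    using strict_mono_on_if_deriv_pos[of S psi psi'] interval psi_deriv psi'_pos[OF assms(1,2)]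
    by blast
  from strict_mono_onD[OF this zero_mem assms(3) \<open>0 < x\<close>] show ?thesis
    using assms(2) by simp
qed (use assms(2) in simp)

lemma strictly_convex:
  assumes "u' 0 < 0" "u 0 < sqrt (2 * k)"
  shows "strictly_convex_on S u"
proof -
  have "(u 0)\<^sup>2 < (sqrt (2 * k))\<^sup>2"
    using assms(2) u_pos[OF zero_mem] by (simp add: power_strict_mono)
  moreover have "0 < sqrt (2 * k)"
    using assms(2) u_pos[OF zero_mem] by linarith
  ultimately have "0 < psi 0"
    by (simp add: psi_def)
  then have "0 < u'' x" if "x \<in> S" for x
    using u''_eq[OF that] psi_pos[OF assms(1) _ that] u_pos[OF that] by (simp add: add_pos_nonneg)
  then have "strict_mono_on S u'"
    using strict_mono_on_if_deriv_pos[of S u' u''] interval u'_deriv by blast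
  then show ?thesis
    using strictly_convex_on_if_deriv_strict_mono[of S u u'] convex u_deriv by blast
qed

end

lemma convex_nonneg_ereal_less: "convex {x::real. 0 \<le> x \<and> ereal x < b}"
proof -
  have "x \<in> {x. 0 \<le> x \<and> ereal x < b}"
    if "0 \<le> a" "ereal c < b" "a \<le> x" "x \<le> c" for a c x :: real
    using that le_less_trans[of "ereal x" "ereal c" b] by simp
  then show ?thesis
    unfolding is_interval_convex_1[symmetric] is_interval_1 by blast
qed

theorem lemma2p11:
  fixes n :: nat and b :: ereal and u u' u'' :: "real \<Rightarrow> real"
  assumes n: "n \<ge> 2"
    and b: "b > 0"
    and pos: "\<And>x. 0 \<le> x \<Longrightarrow> ereal x < b \<Longrightarrow> u x > 0"
    and d1: "\<And>x. 0 \<le> x \<Longrightarrow> ereal x < b \<Longrightarrow>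
               (u has_real_derivative u' x) (at x within {y. 0 \<le> y \<and> ereal y < b})"
    and d2: "\<And>x. 0 \<le> x \<Longrightarrow> ereal x < b \<Longrightarrow>
               (u' has_real_derivative u'' x) (at x within {y. 0 \<le> y \<and> ereal y < b})"
    and ode: "\<And>x. 0 \<le> x \<Longrightarrow> ereal x < b \<Longrightarrow>
               u'' x / (1 + (u' x)\<^sup>2) = x * u' x / 2 - u x / 2 + (real n - 1) / u x"
    and init1: "u 0 < sqrt (2 * (real n - 1))"
    and init2: "u' 0 < 0"
  shows "strictly_convex_on {x. 0 \<le> x \<and> ereal x < b} u"
proof -
  interpret shrinker_profile "{x. 0 \<le> x \<and> ereal x < b}" "real n - 1" u u' u''
    by unfold_locales (use convex_nonneg_ereal_less b pos d1 d2 ode in \<open>auto simp: zero_ereal_def\<close>)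
  show ?thesis
    using init2 init1 by (rule strictly_convex)
qed

end
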